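(* There is an absolute constant $C>0$ such that the following holds. Let $E \subset \mathbb{R}^2$ be compact with $\mathcal{S}^1(E) < \infty$, let $\mu$ be the one-dimensional spherical measure $\mathcal{S}^1$ restricted to $E$, and let $\sigma$ be normalised arclength measure on $S^1$. Then for every $\mu\times\sigma$-measurable set $A \subset E \times S^1$ we have $\mathrm{Fav}(A) \le C\,(\mu\times\sigma)(A)$.
   Context: For $E \subset \mathbb{R}^2$, $\mathcal{S}^1(E) = \lim_{r_+\to 0}\inf\sum_{B\in\mathcal{B}}\mathrm{diam}(B)$, the infimum over at most countable covers $\mathcal{B}$ of $E$ by open balls of radius at most $r_+$ (one-dimensional spherical measure). $\sigma$ is arclength measure on $S^1$ normalised to have total mass $1$, and $m$ is Lebesgue measure on $\mathbb{R}$. For $(c,\omega)\in\mathbb{R}\times S^1$ let $l_{c,\omega}=\{x\in\mathbb{R}^2 : x\cdot\omega = c\}$. For $A \subset \mathbb{R}^2\times S^1$, the Favard length is $\mathrm{Fav}(A) = (m\times\sigma)(\{(c,\omega)\in\mathbb{R}\times S^1 : (l_{c,\omega}\times\{\omega\})\cap A \ne \emptyset\})$. *)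

theory Defs
  imports "HOL-Analysis.Analysis"
begin

text \<open>Countable covers by open balls (centres c i, radii rho i) of radius at most r;
  radius 0 gives the empty ball, which allows finite covers.\<close>
definition sph_content :: "real \<Rightarrow> (real^2) set \<Rightarrow> ennreal" where
  "sph_content r E = (INF cr \<in> {(c, rho). (\<forall>i::nat. 0 \<le> rho i \<and> rho i \<le> r) \<and>
       E \<subseteq> (\<Union>i. ball (c i) (rho i))}.
       (\<Sum>i. ennreal (diameter (ball ((fst cr) i) ((snd cr) i)))))"

text \<open>One-dimensional spherical measure: the limit as r tends to 0+ of the
  (non-increasing in r) quantities above, i.e. their supremum over r > 0.\<close>
definition spherical1 :: "(real^2) set \<Rightarrow> ennreal" where
  "spherical1 E = (SUP r \<in> {0<..}. sph_content r E)"

definition mu_E :: "(real^2) set \<Rightarrow> (real^2) measure" where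
  "mu_E E = completion (measure_of UNIV (sets borel) (\<lambda>B. spherical1 (B \<inter> E)))"

definition sigma_S1 :: "(real^2) measure" where
  "sigma_S1 = distr (uniform_measure lborel {0..<2*pi}) borel
      (\<lambda>t. vector [cos t, sin t] :: real^2)"

definition Fav :: "((real^2) \<times> (real^2)) set \<Rightarrow> ennreal" where
  "Fav A = outer_measure_of (lborel \<Otimes>\<^sub>M sigma_S1)
      {(c, \<omega>). \<omega> \<in> sphere 0 1 \<and> (\<exists>x. x \<bullet> \<omega> = c \<and> (x, \<omega>) \<in> A)}"

end

theory Submission
  imports Defs
begin

text \<open>
  On a rectangle the bound holds with \<open>C = 1\<close>: a line with direction \<open>\<omega>\<close> meets the ball
  \<open>B(c, \<rho>)\<close> only if its offset lies within \<open>\<rho>\<close> of \<open>c \<bullet> \<omega>\<close>, so a cover of \<open>Y\<close> by balls of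
  radii \<open>\<rho>\<^sub>i\<close> leaves, for each direction, a set of offsets of measure at most \<open>\<Sum> 2\<rho>\<^sub>i\<close>.
  Hence \<open>Fav(Y \<times> G) \<le> S\<^sup>1(Y) \<sigma>(G)\<close>. The Favard length is countably subadditive, and the
  product measure is finite (as \<open>S\<^sup>1(E) < \<infinity>\<close>), hence equal to the outer measure induced by
  measurable rectangles; so the bound passes to all measurable sets, and to the completion
  through measurable hulls. That \<open>\<mu>\<close> is a measure on the Borel sets at all is
  Carath\'eodory's criterion, \<open>S\<^sup>1\<close> being additive on positively separated sets.
\<close>

section \<open>Outer measures and Carath\'eodory's criterion\<close>

lemma ennreal_suminf_tail_le:
  fixes f :: "nat \<Rightarrow> ennreal"
  assumes fin: "(\<Sum>i. f i) \<noteq> \<infinity>" and e: "0 < e"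
  obtains n where "(\<Sum>i. f (i + n)) \<le> ennreal e"
proof -
  define a where "a i = enn2real (f i)" for i
  have f_eq: "f i = ennreal (a i)" for i
    using ennreal_suminf_lessD[of f top i] fin by (simp add: a_def less_top)
  have "(\<Sum>i. ennreal (a i)) \<noteq> \<infinity>"
    using fin by (simp add: f_eq[symmetric])
  then have summable: "summable a"
    by (intro summable_suminf_not_top) (simp_all add: a_def)
  obtain n where n: "norm (\<Sum>i. a (i + n)) < e"
    using suminf_exist_split[OF e summable] by blast
  have "(\<Sum>i. f (i + n)) = ennreal (\<Sum>i. a (i + n))"
    unfolding f_eq using summable_ignore_initial_segment[OF summable]
    by (intro suminf_ennreal2) (auto simp: a_def)
  also have "\<dots> \<le> ennreal e"
    using n by (intro ennreal_leI) simp
  finally show ?thesis by (rule that)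
qed

lemma outer_measure_of_countably_subadditive:
  assumes "\<And>i. A i \<subseteq> space M"
  shows "outer_measure_of M (\<Union>i. A i) \<le> (\<Sum>i. outer_measure_of M (A i))"
proof -
  obtain B where B: "\<And>i. B i \<in> sets M" "\<And>i. A i \<subseteq> B i"
    "\<And>i. outer_measure_of M (A i) = emeasure M (B i)"
    using outer_measure_of_attain[OF assms] by metis
  have "outer_measure_of M (\<Union>i. A i) \<le> outer_measure_of M (\<Union>i. B i)"
    using B(2) by (intro outer_measure_of_mono) blast
  also have "\<dots> \<le> (\<Sum>i. emeasure M (B i))"
    using B(1) by (auto intro: emeasure_subadditive_countably)
  finally show ?thesis by (simp add: B(3))
qed

lemma semiring_of_sets_rectangles:
  "semiring_of_sets (space M \<times> space N) {a \<times> b | a b. a \<in> sets M \<and> b \<in> sets N}"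
proof
  show "{a \<times> b | a b. a \<in> sets M \<and> b \<in> sets N} \<subseteq> Pow (space M \<times> space N)"
    by (auto dest: sets.sets_into_space)
  show "{} \<in> {a \<times> b | a b. a \<in> sets M \<and> b \<in> sets N}" by blast
  fix x y assume "x \<in> {a \<times> b | a b. a \<in> sets M \<and> b \<in> sets N}" "y \<in> {a \<times> b | a b. a \<in> sets M \<and> b \<in> sets N}"
  then obtain a b c d where x: "x = a \<times> b" "a \<in> sets M" "b \<in> sets N"
    and y: "y = c \<times> d" "c \<in> sets M" "d \<in> sets N" by blast
  have "x \<inter> y = (a \<inter> c) \<times> (b \<inter> d)" using x y by auto
  then show "x \<inter> y \<in> {a \<times> b | a b. a \<in> sets M \<and> b \<in> sets N}" using x y by blast
  let ?C = "{(a - c) \<times> b, (a \<inter> c) \<times> (b - d)}"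
  have "x - y = \<Union>?C" using x y by auto
  moreover have "?C \<subseteq> {a \<times> b | a b. a \<in> sets M \<and> b \<in> sets N}" using x y by blast
  moreover have "disjoint ?C" by (auto simp: disjoint_def)
  ultimately show "\<exists>C\<subseteq>{a \<times> b | a b. a \<in> sets M \<and> b \<in> sets N}. finite C \<and> disjoint C \<and> x - y = \<Union>C"
    by blast
qed

lemma (in ring_of_sets) measure_space_outer_measure:
  assumes pos: "positive M f" and ca: "countably_additive M f"
  shows "measure_space \<Omega> (sigma_sets \<Omega> M) (outer_measure M f)"
proof -
  have inc: "increasing M f"
    using additive_increasing ca countably_additive_additive pos by blast
  interpret Pow: sigma_algebra \<Omega> "Pow \<Omega>" by (rule sigma_algebra_Pow)
  let ?L = "lambda_system \<Omega> (Pow \<Omega>) (outer_measure M f)"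
  have L: "measure_space \<Omega> ?L (outer_measure M f)"
    by (rule Pow.caratheodory_lemma[OF outer_measure_space_outer_measure[OF pos inc]])
  have "M \<subseteq> ?L"
    using algebra_subset_lambda_system[OF pos inc countably_additive_additive[OF pos ca]] .
  then have "sigma_sets \<Omega> M \<subseteq> ?L"
    using L by (intro sigma_algebra.sigma_sets_subset) (auto simp: measure_space_def)
  then show ?thesis
    by (intro measure_down[OF L] sigma_algebra_sigma_sets) (simp_all add: space_closed)
qed

text \<open>Uniqueness of the Carath\'eodory extension.\<close>

lemma emeasure_eq_outer_measure:
  assumes R: "ring_of_sets \<Omega> R" and sets_M: "sets M = sigma_sets \<Omega> R"
    and top: "\<Omega> \<in> R" and fin: "emeasure M \<Omega> \<noteq> \<infinity>" and B: "B \<in> sets M"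
  shows "emeasure M B = outer_measure R (emeasure M) B"
proof -
  interpret ring_of_sets \<Omega> R by (rule R)
  have R_sets: "R \<subseteq> sets M" using sets_M by auto
  have ca: "countably_additive R (emeasure M)"
    using R_sets by (auto simp: countably_additive_def intro: emeasure_countably_additive[unfolded countably_additive_def, rule_format])
  define N where "N = measure_of \<Omega> (sigma_sets \<Omega> R) (outer_measure R (emeasure M))"
  have ms: "measure_space \<Omega> (sigma_sets \<Omega> R) (outer_measure R (emeasure M))"
    by (rule measure_space_outer_measure[OF _ ca]) (simp add: positive_def)
  have sets_N: "sets N = sigma_sets \<Omega> R"
    unfolding N_def by (rule sigma_algebra.sets_measure_of_eq[OF sigma_algebra_sigma_sets[OF space_closed]])
  have emeasure_N: "emeasure N X = outer_measure R (emeasure M) X" if "X \<in> sigma_sets \<Omega> R" for X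
    unfolding N_def using ms that by (intro emeasure_measure_of_sigma) (auto simp: measure_space_def)
  have "M = N"
  proof (rule measure_eqI_generator_eq[where E = R and \<Omega> = \<Omega> and A = "\<lambda>_. \<Omega>"])
    fix X assume "X \<in> R"
    then show "emeasure M X = emeasure N X"
      by (simp add: emeasure_N outer_measure_agrees[OF _ ca] positive_def)
  qed (use Int sets_M sets_N top fin space_closed in \<open>auto simp: Int_stable_def\<close>)
  then show ?thesis using B sets_M emeasure_N by simp
qed

locale outer_measure_fun =
  fixes \<phi> :: "'a set \<Rightarrow> ennreal"
  assumes empty[simp]: "\<phi> {} = 0"
    and mono: "\<And>X Y. X \<subseteq> Y \<Longrightarrow> \<phi> X \<le> \<phi> Y"
    and countably_subadditive: "\<And>A :: nat \<Rightarrow> 'a set. \<phi> (\<Union>i. A i) \<le> (\<Sum>i. \<phi> (A i))"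
begin

lemma subadditive: "\<phi> (A \<union> B) \<le> \<phi> A + \<phi> B"
  using countably_subadditive[of "binaryset A B"] by (simp add: UN_binaryset_eq suminf_binaryset_eq)

lemma subadditive_finite: "finite I \<Longrightarrow> \<phi> (\<Union>i\<in>I. A i) \<le> (\<Sum>i\<in>I. \<phi> (A i))"
proof (induction I rule: finite_induct)
  case (insert i I)
  then show ?case
    using subadditive[of "A i" "\<Union>i\<in>I. A i"] by (auto intro: order_trans add_left_mono)
qed simp

lemma restrict: "outer_measure_fun (\<lambda>A. \<phi> (A \<inter> S))"
  by unfold_locales (auto intro: mono simp: countably_subadditive[of "\<lambda>i. _ i \<inter> S", simplified])

lemma le_emeasure_if_le_on_generator:
  assumes R: "semiring_of_sets \<Omega> R" and sets_M: "sets M = sigma_sets \<Omega> R"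
    and top: "\<Omega> \<in> R" and fin: "emeasure M \<Omega> \<noteq> \<infinity>"
    and le: "\<And>x. x \<in> R \<Longrightarrow> \<phi> x \<le> emeasure M x" and B: "B \<in> sets M"
  shows "\<phi> B \<le> emeasure M B"
proof -
  interpret semiring_of_sets \<Omega> R by (rule R)
  interpret ring: ring_of_sets \<Omega> generated_ring by (rule generating_ring)
  have sets_M': "sets M = sigma_sets \<Omega> generated_ring"
    by (simp add: sets_M sigma_sets_generated_ring_eq)
  have ring_le: "\<phi> x \<le> emeasure M x" if "x \<in> generated_ring" for x
  proof -
    from that obtain C where C: "finite C" "disjoint C" "C \<subseteq> R" "x = \<Union>C"
      by (rule generated_ringE)
    have "\<phi> x \<le> (\<Sum>c\<in>C. \<phi> c)"
      using subadditive_finite[OF C(1), of id] C(4) by simp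
    also have "\<dots> \<le> (\<Sum>c\<in>C. emeasure M c)"
      using C(3) le by (intro sum_mono) auto
    also have "\<dots> = emeasure M x"
      using C sets_M by (subst sum_emeasure) (auto simp: disjoint_family_on_def disjoint_def)
    finally show ?thesis .
  qed
  have "\<phi> B \<le> outer_measure generated_ring (emeasure M) B"
    unfolding outer_measure_def
  proof (rule INF_greatest, clarify)
    fix A :: "nat \<Rightarrow> 'a set" assume A: "range A \<subseteq> generated_ring" "B \<subseteq> (\<Union>i. A i)"
    have "\<phi> B \<le> (\<Sum>i. \<phi> (A i))"
      using mono[OF A(2)] countably_subadditive by (rule order_trans)
    also have "\<dots> \<le> (\<Sum>i. emeasure M (A i))"
      using A(1) by (intro suminf_le ring_le) auto
    finally show "\<phi> B \<le> (\<Sum>i. emeasure M (A i))" .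
  qed
  also have "\<dots> = emeasure M B"
    using emeasure_eq_outer_measure[OF generating_ring sets_M' generated_ringI_Basic[OF top] fin B]
    by simp
  finally show ?thesis .
qed

end

definition dist_shell :: "'a::metric_space set \<Rightarrow> 'a set \<Rightarrow> nat \<Rightarrow> 'a set" where
  "dist_shell X F k = {x \<in> X. 1 / (real k + 2) < infdist x F \<and> infdist x F \<le> 1 / (real k + 1)}"

lemma dist_shell_dist_ge:
  assumes "j + 2 \<le> k" "a \<in> dist_shell X F j" "b \<in> dist_shell X F k"
  shows "1 / (real j + 2) - 1 / (real j + 3) \<le> dist a b"
proof -
  have "1 / (real k + 1) \<le> 1 / (real j + 3)"
    using assms(1) by (intro divide_left_mono) auto
  then have "1 / (real j + 2) - 1 / (real j + 3) \<le> infdist a F - infdist b F"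
    using assms(2,3) by (simp add: dist_shell_def)
  also have "\<dots> \<le> dist a b"
    using infdist_triangle[of a F b] by simp
  finally show ?thesis .
qed

lemma dist_shell_separated:
  assumes "j + 2 \<le> k \<or> k + 2 \<le> j"
  shows "\<exists>d>0. \<forall>a\<in>dist_shell X F j. \<forall>b\<in>dist_shell X F k. d \<le> dist a b"
proof -
  define m where "m = min j k"
  have "0 < 1 / (real m + 2) - 1 / (real m + 3)"
    by (simp add: field_simps add_pos_nonneg)
  moreover have "1 / (real m + 2) - 1 / (real m + 3) \<le> dist a b"
    if "a \<in> dist_shell X F j" "b \<in> dist_shell X F k" for a b
    using assms dist_shell_dist_ge[of j k a X F b] dist_shell_dist_ge[of k j b X F a] that
    by (auto simp: m_def min_def dist_commute)
  ultimately show ?thesis by blast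
qed

lemma dist_shell_cover:
  assumes "x \<in> X" "0 < infdist x F" "infdist x F \<le> 1 / (real n + 1)"
  shows "\<exists>k\<ge>n. x \<in> dist_shell X F k"
proof -
  define h where "h = infdist x F"
  define m where "m = \<lfloor>1 / h\<rfloor>"
  have h: "0 < h" "real n + 1 \<le> 1 / h"
    using assms(2,3) by (auto simp: h_def field_simps)
  have m: "of_int m \<le> 1 / h" "1 / h < of_int m + 1" "int n + 1 \<le> m"
    unfolding m_def using h by (auto simp: le_floor_iff)
  show ?thesis
  proof (intro exI conjI)
    show "n \<le> nat (m - 1)" using m by linarith
    have "1 / (real (nat (m - 1)) + 2) < h" "h \<le> 1 / (real (nat (m - 1)) + 1)"
      using m h by (simp_all add: of_nat_nat field_simps)
    then show "x \<in> dist_shell X F (nat (m - 1))"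
      using assms(1) by (simp add: dist_shell_def h_def)
  qed
qed

locale metric_outer_measure = outer_measure_fun \<phi>
  for \<phi> :: "'a::metric_space set \<Rightarrow> ennreal" +
  assumes separated_additive:
    "\<And>d A B. 0 < d \<Longrightarrow> (\<And>a b. a \<in> A \<Longrightarrow> b \<in> B \<Longrightarrow> d \<le> dist a b) \<Longrightarrow>
      \<phi> A + \<phi> B \<le> \<phi> (A \<union> B)"
begin

lemma restrict_metric:
  fixes S :: "'a set"
  shows "metric_outer_measure (\<lambda>A. \<phi> (A \<inter> S))"
proof -
  interpret S: outer_measure_fun "\<lambda>A. \<phi> (A \<inter> S)" by (rule restrict)
  show ?thesis
  proof
    fix d :: real and A B :: "'a set" assume "0 < d" "\<And>a b. a \<in> A \<Longrightarrow> b \<in> B \<Longrightarrow> d \<le> dist a b"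
    then show "\<phi> (A \<inter> S) + \<phi> (B \<inter> S) \<le> \<phi> ((A \<union> B) \<inter> S)"
      using separated_additive[of d "A \<inter> S" "B \<inter> S"] by (simp add: Int_Un_distrib2)
  qed
qed

lemma separated_sum_le:
  assumes "finite I"
    and "\<And>i j. i \<in> I \<Longrightarrow> j \<in> I \<Longrightarrow> i \<noteq> j \<Longrightarrow> \<exists>d>0. \<forall>a\<in>A i. \<forall>b\<in>A j. d \<le> dist a b"
  shows "(\<Sum>i\<in>I. \<phi> (A i)) \<le> \<phi> (\<Union>i\<in>I. A i)"
  using assms
proof (induction I rule: finite_induct)
  case (insert i I)
  have "\<exists>d>0. \<forall>a\<in>A i. \<forall>b\<in>\<Union>j\<in>I. A j. d \<le> dist a b"
  proof (cases "I = {}")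
    case False
    have "\<forall>j\<in>I. \<exists>d>0. \<forall>a\<in>A i. \<forall>b\<in>A j. d \<le> dist a b"
      using insert.prems insert.hyps(2) by blast
    then obtain d where d: "\<And>j. j \<in> I \<Longrightarrow> 0 < d j"
      "\<And>j a b. j \<in> I \<Longrightarrow> a \<in> A i \<Longrightarrow> b \<in> A j \<Longrightarrow> d j \<le> dist a b"
      by metis
    have "0 < Min (d ` I)"
      using d(1) insert.hyps(1) False by simp
    moreover have "Min (d ` I) \<le> dist a b" if "a \<in> A i" "b \<in> (\<Union>j\<in>I. A j)" for a b
    proof -
      from that(2) obtain j where "j \<in> I" "b \<in> A j" by blast
      then have "Min (d ` I) \<le> d j" using insert.hyps(1) by simp
      also have "\<dots> \<le> dist a b" using d(2) \<open>j \<in> I\<close> \<open>b \<in> A j\<close> that(1) by blast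
      finally show ?thesis .
    qed
    ultimately show ?thesis by blast
  qed (auto intro: exI[of _ 1])
  then obtain d where "0 < d" "\<And>a b. a \<in> A i \<Longrightarrow> b \<in> (\<Union>j\<in>I. A j) \<Longrightarrow> d \<le> dist a b"
    by blast
  then have sep: "\<phi> (A i) + \<phi> (\<Union>j\<in>I. A j) \<le> \<phi> (A i \<union> (\<Union>j\<in>I. A j))"
    by (rule separated_additive)
  have "(\<Sum>j\<in>insert i I. \<phi> (A j)) = \<phi> (A i) + (\<Sum>j\<in>I. \<phi> (A j))"
    using insert.hyps by simp
  also have "\<dots> \<le> \<phi> (A i) + \<phi> (\<Union>j\<in>I. A j)"
    using insert.IH insert.prems by (intro add_left_mono) blast
  also have "\<dots> \<le> \<phi> (\<Union>j\<in>insert i I. A j)"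
    using sep by simp
  finally show ?case .
qed simp

text \<open>Shells two indices apart are positively separated, so \<open>\<phi>\<close> is additive on each parity class.\<close>

lemma suminf_dist_shell_le: "(\<Sum>k. \<phi> (dist_shell X F k)) \<le> 2 * \<phi> X"
proof -
  have parity: "(\<Sum>k<N. \<phi> (dist_shell X F (2 * k + p))) \<le> \<phi> X" for N p
  proof -
    have "(\<Sum>k<N. \<phi> (dist_shell X F (2 * k + p))) \<le> \<phi> (\<Union>k<N. dist_shell X F (2 * k + p))"
    proof (rule separated_sum_le)
      fix i j :: nat assume "i \<noteq> j"
      then show "\<exists>d>0. \<forall>a\<in>dist_shell X F (2 * i + p). \<forall>b\<in>dist_shell X F (2 * j + p). d \<le> dist a b"
        by (intro dist_shell_separated) linarith
    qed simp
    also have "\<dots> \<le> \<phi> X"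
      by (intro mono) (auto simp: dist_shell_def)
    finally show ?thesis .
  qed
  have "(\<Sum>k<N. \<phi> (dist_shell X F k)) \<le> 2 * \<phi> X" for N
  proof -
    have "(\<Sum>k<N. \<phi> (dist_shell X F k)) \<le> (\<Sum>k<2 * N. \<phi> (dist_shell X F k))"
      by (intro sum_mono2) auto
    also have "\<dots> = (\<Sum>k<N. \<phi> (dist_shell X F (2 * k + 0))) + (\<Sum>k<N. \<phi> (dist_shell X F (2 * k + 1)))"
      by (induction N) (simp_all add: algebra_simps)
    also have "\<dots> \<le> \<phi> X + \<phi> X"
      by (intro add_mono parity)
    finally show ?thesis by (simp add: mult_2)
  qed
  then show ?thesis
    unfolding suminf_eq_SUP by (rule SUP_least)
qed

text \<open>Carath\'eodory's criterion: the points of \<open>X - F\<close> at distance more than \<open>1/(n+1)\<close> from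
  \<open>F\<close> are separated from \<open>X \<inter> F\<close>, and the remaining points lie in the shells beyond the
  \<open>n\<close>-th, whose total mass tends to \<open>0\<close>.\<close>

lemma closed_split:
  assumes "closed F"
  shows "\<phi> (X \<inter> F) + \<phi> (X - F) \<le> \<phi> X"
proof (cases "F = {} \<or> \<phi> X = \<infinity>")
  case False
  define inner where "inner n = {x \<in> X. 1 / (real n + 1) < infdist x F}" for n
  have inner: "\<phi> (X \<inter> F) + \<phi> (inner n) \<le> \<phi> X" for n
  proof -
    have "\<phi> (X \<inter> F) + \<phi> (inner n) \<le> \<phi> ((X \<inter> F) \<union> inner n)"
    proof (rule separated_additive)
      fix a b assume "a \<in> X \<inter> F" "b \<in> inner n"
      then show "1 / (real n + 1) \<le> dist a b"
        using infdist_le[of a F b] by (auto simp: inner_def dist_commute)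
    qed simp
    also have "\<dots> \<le> \<phi> X" by (intro mono) (auto simp: inner_def)
    finally show ?thesis .
  qed
  have cover: "X - F \<subseteq> inner n \<union> (\<Union>k. dist_shell X F (k + n))" for n
  proof
    fix x assume x: "x \<in> X - F"
    then have "0 < infdist x F"
      using False infdist_pos_not_in_closed[OF assms] by auto
    with x dist_shell_cover[of x X F n] show "x \<in> inner n \<union> (\<Union>k. dist_shell X F (k + n))"
      by (cases "1 / (real n + 1) < infdist x F") (auto simp: inner_def le_iff_add add.commute)
  qed
  have outer: "\<phi> (X - F) \<le> \<phi> (inner n) + (\<Sum>k. \<phi> (dist_shell X F (k + n)))" for n
  proof -
    have "\<phi> (X - F) \<le> \<phi> (inner n) + \<phi> (\<Union>k. dist_shell X F (k + n))"
      using mono[OF cover] subadditive by (rule order_trans)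
    also have "\<dots> \<le> \<phi> (inner n) + (\<Sum>k. \<phi> (dist_shell X F (k + n)))"
      by (intro add_left_mono countably_subadditive)
    finally show ?thesis .
  qed
  have "2 * \<phi> X \<noteq> \<infinity>"
    using False by (simp add: ennreal_mult_eq_top_iff)
  then have shells_fin: "(\<Sum>k. \<phi> (dist_shell X F k)) \<noteq> \<infinity>"
    using neq_top_trans[OF _ suminf_dist_shell_le] by simp
  show ?thesis
  proof (rule ennreal_le_epsilon)
    fix e :: real assume "0 < e"
    then obtain n where tail: "(\<Sum>k. \<phi> (dist_shell X F (k + n))) \<le> ennreal e"
      using ennreal_suminf_tail_le[OF shells_fin] by blast
    have "\<phi> (X \<inter> F) + \<phi> (X - F) \<le> (\<phi> (X \<inter> F) + \<phi> (inner n)) + (\<Sum>k. \<phi> (dist_shell X F (k + n)))"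
      using outer[of n] by (simp add: add.assoc add_left_mono)
    also have "\<dots> \<le> \<phi> X + ennreal e"
      by (intro add_mono inner tail)
    finally show "\<phi> (X \<inter> F) + \<phi> (X - F) \<le> \<phi> X + ennreal e" .
  qed
qed auto

lemma measure_space_borel: "measure_space UNIV (sets borel) \<phi>"
proof -
  interpret Pow: sigma_algebra "UNIV :: 'a set" "Pow UNIV" by (rule sigma_algebra_Pow)
  let ?L = "lambda_system UNIV (Pow UNIV) \<phi>"
  have "outer_measure_space (Pow UNIV) \<phi>"
    by (auto simp: outer_measure_space_def positive_def increasing_def countably_subadditive_def
        intro: mono countably_subadditive)
  then have L: "measure_space UNIV ?L \<phi>"
    by (rule Pow.caratheodory_lemma)
  have "U \<in> ?L" if "open U" for U
    unfolding lambda_system_def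
  proof (intro CollectI conjI ballI)
    fix X :: "'a set"
    have "\<phi> (U \<inter> X) + \<phi> ((UNIV - U) \<inter> X) \<le> \<phi> X"
      using closed_split[OF closed_Compl[OF that], of X] by (simp add: Int_commute Diff_eq add.commute)
    moreover have "\<phi> X \<le> \<phi> (U \<inter> X) + \<phi> ((UNIV - U) \<inter> X)"
      using subadditive[of "U \<inter> X" "(UNIV - U) \<inter> X"] by (simp add: Int_Un_distrib2[symmetric])
    ultimately show "\<phi> (U \<inter> X) + \<phi> ((UNIV - U) \<inter> X) = \<phi> X" by simp
  qed auto
  then have "sets borel \<subseteq> ?L"
    using L unfolding sets_borel
    by (intro sigma_algebra.sigma_sets_subset) (auto simp: measure_space_def)
  then show ?thesis
    by (intro measure_down[OF L]) (metis sets.sigma_algebra_axioms space_borel)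
qed

end

section \<open>The spherical measure\<close>

lemma sph_content_le_cover:
  fixes \<rho> :: "nat \<Rightarrow> real"
  assumes "\<And>i. 0 \<le> \<rho> i \<and> \<rho> i \<le> r" "X \<subseteq> (\<Union>i. ball (c i) (\<rho> i))"
  shows "sph_content r X \<le> (\<Sum>i. ennreal (2 * \<rho> i))"
proof -
  have "sph_content r X \<le> (\<Sum>i. ennreal (diameter (ball (c i) (\<rho> i))))"
    unfolding sph_content_def by (rule INF_lower2[of "(c, \<rho>)"]) (use assms in auto)
  also have "\<dots> = (\<Sum>i. ennreal (2 * \<rho> i))"
    using assms(1) by (intro suminf_cong) (force simp: not_less)
  finally show ?thesis .
qed

lemma sph_content_greatest:
  assumes "\<And>c (\<rho> :: nat \<Rightarrow> real). (\<And>i. 0 \<le> \<rho> i \<and> \<rho> i \<le> r) \<Longrightarrow>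
    X \<subseteq> (\<Union>i. ball (c i) (\<rho> i)) \<Longrightarrow> y \<le> (\<Sum>i. ennreal (2 * \<rho> i))"
  shows "y \<le> sph_content r X"
  unfolding sph_content_def
proof (rule INF_greatest, clarify)
  fix c and \<rho> :: "nat \<Rightarrow> real"
  assume cover: "\<forall>i. 0 \<le> \<rho> i \<and> \<rho> i \<le> r" "X \<subseteq> (\<Union>i. ball (c i) (\<rho> i))"
  have "(\<Sum>i. ennreal (diameter (ball (c i) (\<rho> i)))) = (\<Sum>i. ennreal (2 * \<rho> i))"
    using cover(1) by (intro suminf_cong) (force simp: not_less)
  with assms cover show "y \<le> (\<Sum>i. ennreal (diameter (ball (fst (c, \<rho>) i) (snd (c, \<rho>) i))))"
    by simp
qed

lemma sph_content_lessE:
  assumes "sph_content r X < a"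
  obtains c and \<rho> :: "nat \<Rightarrow> real" where "\<And>i. 0 \<le> \<rho> i \<and> \<rho> i \<le> r"
    "X \<subseteq> (\<Union>i. ball (c i) (\<rho> i))" "(\<Sum>i. ennreal (2 * \<rho> i)) < a"
proof -
  have "\<not> a \<le> sph_content r X" using assms by simp
  then show ?thesis
    using sph_content_greatest[of r X a] that by (meson not_le)
qed

lemma sph_content_mono: "X \<subseteq> Y \<Longrightarrow> sph_content r X \<le> sph_content r Y"
  unfolding sph_content_def by (rule INF_superset_mono) auto

lemma sph_content_antimono: "r \<le> r' \<Longrightarrow> sph_content r' X \<le> sph_content r X"
  unfolding sph_content_def by (rule INF_superset_mono) (auto intro: order_trans)

lemma sph_content_empty: "0 \<le> r \<Longrightarrow> sph_content r {} = 0"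
  using sph_content_le_cover[of "\<lambda>_. 0" r "{}" "\<lambda>_. 0"] by simp

lemma suminf_ennreal_halves: "0 < e \<Longrightarrow> (\<Sum>n. ennreal (e / 2 ^ Suc n)) = ennreal e"
proof -
  assume e: "0 < e"
  have "(\<lambda>n. e * (1 / 2) ^ Suc n) sums (e * 1)"
    by (intro sums_mult power_half_series)
  then have sums: "(\<lambda>n. e / 2 ^ Suc n) sums e"
    by (simp add: power_one_over)
  then have "(\<Sum>n. ennreal (e / 2 ^ Suc n)) = ennreal (\<Sum>n. e / 2 ^ Suc n)"
    using e by (intro suminf_ennreal2) (auto simp: sums_iff)
  with sums show ?thesis by (simp add: sums_iff)
qed

text \<open>Merge covers of the \<open>X n\<close> that are \<open>e/2^(n+1)\<close>-optimal into one cover, indexed via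
  \<open>prod_decode\<close>.\<close>

lemma sph_content_countably_subadditive:
  "sph_content r (\<Union>n. X n) \<le> (\<Sum>n. sph_content r (X n))"
proof (rule ennreal_le_epsilon)
  fix e :: real assume fin: "(\<Sum>n. sph_content r (X n)) < top" and e: "0 < e"
  have "\<forall>n. \<exists>c \<rho>. (\<forall>i. 0 \<le> \<rho> i \<and> \<rho> i \<le> r) \<and> X n \<subseteq> (\<Union>i. ball (c i) (\<rho> i)) \<and>
     (\<Sum>i. ennreal (2 * \<rho> i)) < sph_content r (X n) + ennreal (e / 2 ^ Suc n)"
  proof
    fix n
    have "sph_content r (X n) < top" using ennreal_suminf_lessD[OF fin] .
    then have "sph_content r (X n) + 0 < sph_content r (X n) + ennreal (e / 2 ^ Suc n)"
      using e by (subst ennreal_add_left_cancel_less) simp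
    then have "sph_content r (X n) < sph_content r (X n) + ennreal (e / 2 ^ Suc n)"
      by simp
    then show "\<exists>c \<rho>. (\<forall>i. 0 \<le> \<rho> i \<and> \<rho> i \<le> r) \<and> X n \<subseteq> (\<Union>i. ball (c i) (\<rho> i)) \<and>
      (\<Sum>i. ennreal (2 * \<rho> i)) < sph_content r (X n) + ennreal (e / 2 ^ Suc n)"
      by (elim sph_content_lessE) blast
  qed
  then obtain c \<rho> where cover: "\<And>n i. 0 \<le> \<rho> n i \<and> \<rho> n i \<le> r" "\<And>n. X n \<subseteq> (\<Union>i. ball (c n i) (\<rho> n i))"
    and sum: "\<And>n. (\<Sum>i. ennreal (2 * \<rho> n i)) < sph_content r (X n) + ennreal (e / 2 ^ Suc n)"
    unfolding choice_iff by blast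
  let ?c = "\<lambda>k. case prod_decode k of (n, i) \<Rightarrow> c n i"
  let ?\<rho> = "\<lambda>k. case prod_decode k of (n, i) \<Rightarrow> \<rho> n i"
  have "(\<Union>n. X n) \<subseteq> (\<Union>k. ball (?c k) (?\<rho> k))"
  proof
    fix x assume "x \<in> (\<Union>n. X n)"
    then obtain n i where "x \<in> ball (c n i) (\<rho> n i)" using cover(2) by blast
    then show "x \<in> (\<Union>k. ball (?c k) (?\<rho> k))"
      by (intro UN_I[of "prod_encode (n, i)"]) auto
  qed
  then have "sph_content r (\<Union>n. X n) \<le> (\<Sum>k. ennreal (2 * ?\<rho> k))"
    using cover(1) by (intro sph_content_le_cover) (auto split: prod.split)
  also have "\<dots> = (\<Sum>n. \<Sum>i. ennreal (2 * \<rho> n i))"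
    using suminf_ennreal_2dimen[of "\<lambda>n. \<Sum>i. ennreal (2 * \<rho> n i)" "\<lambda>(n, i). ennreal (2 * \<rho> n i)"]
    by (simp add: case_prod_beta prod.case_distrib)
  also have "\<dots> \<le> (\<Sum>n. sph_content r (X n) + ennreal (e / 2 ^ Suc n))"
    using sum by (intro suminf_le) (auto intro: less_imp_le)
  also have "\<dots> = (\<Sum>n. sph_content r (X n)) + ennreal e"
    using suminf_ennreal_halves[OF e] by (simp add: suminf_add[symmetric])
  finally show "sph_content r (\<Union>n. X n) \<le> (\<Sum>n. sph_content r (X n)) + ennreal e" .
qed

text \<open>A ball of radius \<open>r\<close> with \<open>2 r < d\<close> meets at most one of two \<open>d\<close>-separated sets.\<close>

lemma sph_content_separated_additive:
  assumes r: "0 < r" "2 * r < d" and sep: "\<And>a b. a \<in> A \<Longrightarrow> b \<in> B \<Longrightarrow> d \<le> dist a b"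
  shows "sph_content r A + sph_content r B \<le> sph_content r (A \<union> B)"
proof (rule sph_content_greatest)
  fix c and \<rho> :: "nat \<Rightarrow> real"
  assume \<rho>: "\<And>i. 0 \<le> \<rho> i \<and> \<rho> i \<le> r" and cover: "A \<union> B \<subseteq> (\<Union>i. ball (c i) (\<rho> i))"
  define \<rho>_on where "\<rho>_on S i = (if ball (c i) (\<rho> i) \<inter> S \<noteq> {} then \<rho> i else 0)" for S i
  have content_le: "sph_content r S \<le> (\<Sum>i. ennreal (2 * \<rho>_on S i))" if "S \<subseteq> A \<union> B" for S
  proof (rule sph_content_le_cover)
    show "0 \<le> \<rho>_on S i \<and> \<rho>_on S i \<le> r" for i using \<rho> r by (simp add: \<rho>_on_def)
    show "S \<subseteq> (\<Union>i. ball (c i) (\<rho>_on S i))"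
      using that cover by (fastforce simp: \<rho>_on_def)
  qed
  have not_both: "\<not> (ball (c i) (\<rho> i) \<inter> A \<noteq> {} \<and> ball (c i) (\<rho> i) \<inter> B \<noteq> {})" for i
  proof
    assume "ball (c i) (\<rho> i) \<inter> A \<noteq> {} \<and> ball (c i) (\<rho> i) \<inter> B \<noteq> {}"
    then obtain a b where ab: "a \<in> A" "b \<in> B" "dist (c i) a < \<rho> i" "dist (c i) b < \<rho> i" by auto
    have "dist a b \<le> dist (c i) a + dist (c i) b" by (rule dist_triangle3)
    also have "\<dots> < 2 * r" using ab \<rho>[of i] by linarith
    finally show False using sep[OF ab(1,2)] r by simp
  qed
  have "sph_content r A + sph_content r B \<le> (\<Sum>i. ennreal (2 * \<rho>_on A i)) + (\<Sum>i. ennreal (2 * \<rho>_on B i))"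
    by (intro add_mono content_le) auto
  also have "\<dots> = (\<Sum>i. ennreal (2 * \<rho>_on A i) + ennreal (2 * \<rho>_on B i))"
    by (rule suminf_add) auto
  also have "\<dots> \<le> (\<Sum>i. ennreal (2 * \<rho> i))"
    using not_both by (intro suminf_le) (auto simp: \<rho>_on_def)
  finally show "sph_content r A + sph_content r B \<le> (\<Sum>i. ennreal (2 * \<rho> i))" .
qed

lemma spherical1_ge_sph_content: "0 < r \<Longrightarrow> sph_content r X \<le> spherical1 X"
  unfolding spherical1_def by (rule SUP_upper) simp

lemma spherical1_separated_additive:
  assumes d: "0 < d" and sep: "\<And>a b. a \<in> A \<Longrightarrow> b \<in> B \<Longrightarrow> d \<le> dist a b"
  shows "spherical1 A + spherical1 B \<le> spherical1 (A \<union> B)"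
proof -
  have ne: "{0::real<..} \<noteq> {}" by (auto intro: exI[of _ 1])
  have "sph_content r1 A + sph_content r2 B \<le> spherical1 (A \<union> B)" if "0 < r1" "0 < r2" for r1 r2
  proof -
    define r where "r = min (min r1 r2) (d / 4)"
    have r: "0 < r" "r \<le> r1" "r \<le> r2" "2 * r < d" using that d by (auto simp: r_def)
    have "sph_content r1 A + sph_content r2 B \<le> sph_content r A + sph_content r B"
      using r by (intro add_mono sph_content_antimono)
    also have "\<dots> \<le> sph_content r (A \<union> B)"
      using r sep by (intro sph_content_separated_additive)
    also have "\<dots> \<le> spherical1 (A \<union> B)"
      using r by (intro spherical1_ge_sph_content)
    finally show ?thesis .
  qed
  then have "(SUP r2\<in>{0<..}. SUP r1\<in>{0<..}. sph_content r1 A + sph_content r2 B) \<le> spherical1 (A \<union> B)"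
    by (intro SUP_least) auto
  then show ?thesis
    unfolding spherical1_def[of A] spherical1_def[of B]
    by (simp add: ennreal_SUP_add_left[OF ne, symmetric] ennreal_SUP_add_right[OF ne])
qed

interpretation spherical1: metric_outer_measure spherical1
proof
  show "spherical1 {} = 0"
    unfolding spherical1_def by (simp add: sph_content_empty)
  show "spherical1 X \<le> spherical1 Y" if "X \<subseteq> Y" for X Y
    unfolding spherical1_def using that by (intro SUP_mono) (auto intro: sph_content_mono)
  show "spherical1 (\<Union>i. A i) \<le> (\<Sum>i. spherical1 (A i))" for A :: "nat \<Rightarrow> (real^2) set"
    unfolding spherical1_def[of "\<Union>i. A i"]
  proof (rule SUP_least)
    fix r :: real assume "r \<in> {0<..}"
    then have "(\<Sum>i. sph_content r (A i)) \<le> (\<Sum>i. spherical1 (A i))"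
      by (intro suminf_le) (auto intro: spherical1_ge_sph_content)
    then show "sph_content r (\<Union>i. A i) \<le> (\<Sum>i. spherical1 (A i))"
      by (rule order_trans[OF sph_content_countably_subadditive])
  qed
qed (rule spherical1_separated_additive)

lemma sets_mu_E_base:
  "sets (measure_of UNIV (sets borel) (\<lambda>B. spherical1 (B \<inter> E))) = sets borel"
  using sets.sigma_sets_eq[of borel] by (simp add: sets_measure_of)

lemma emeasure_mu_E:
  assumes "B \<in> sets borel"
  shows "emeasure (mu_E E) B = spherical1 (B \<inter> E)"
proof -
  interpret E: metric_outer_measure "\<lambda>B. spherical1 (B \<inter> E)"
    by (rule spherical1.restrict_metric)
  have "emeasure (measure_of UNIV (sets borel) (\<lambda>B. spherical1 (B \<inter> E))) B = spherical1 (B \<inter> E)"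
    using E.measure_space_borel assms
    by (intro emeasure_measure_of_sigma) (auto simp: measure_space_def sets.sigma_algebra_axioms[of borel, simplified])
  then show ?thesis
    using assms by (simp add: mu_E_def sets_mu_E_base)
qed

lemma space_mu_E[simp]: "space (mu_E E) = UNIV"
  by (simp add: mu_E_def space_measure_of_conv)

lemma mu_E_upper:
  assumes "A \<in> sets (mu_E E)"
  shows "\<exists>B\<in>sets borel. A \<subseteq> B \<and> emeasure (mu_E E) A = spherical1 (B \<inter> E)"
proof -
  let ?M = "measure_of UNIV (sets borel) (\<lambda>B. spherical1 (B \<inter> E))"
  obtain B where B: "B \<in> sets ?M" "A \<subseteq> B" "emeasure (completion ?M) A = emeasure ?M B"
    using Complete_Measure.completion_upper[of A ?M] assms by (auto simp: mu_E_def)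
  moreover have "emeasure ?M B = emeasure (mu_E E) B"
    using B(1) by (simp add: mu_E_def)
  ultimately show ?thesis
    by (auto simp: sets_mu_E_base emeasure_mu_E mu_E_def[symmetric])
qed

section \<open>Favard length\<close>

lemma sets_sigma_S1[simp]: "sets sigma_S1 = sets borel"
  by (simp add: sigma_S1_def)

lemma space_sigma_S1[simp]: "space sigma_S1 = UNIV"
  by (simp add: sigma_S1_def)

lemma borel_measurable_circle: "(\<lambda>t::real. vector [cos t, sin t] :: real^2) \<in> borel_measurable borel"
proof -
  have "(\<lambda>t::real. vector [cos t, sin t] :: real^2) = (\<lambda>t. \<chi> i. if i = 1 then cos t else sin t)"
    by (rule ext) (simp add: vec_eq_iff forall_2)
  moreover have "continuous_on UNIV (\<lambda>t::real. \<chi> i::2. if i = 1 then cos t else sin t)"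
  proof (rule continuous_on_vec_lambda)
    fix i :: 2
    show "continuous_on UNIV (\<lambda>t::real. if i = 1 then cos t else sin t)"
      by (cases "i = 1") (auto intro: continuous_intros)
  qed
  ultimately show ?thesis
    by (simp add: borel_measurable_continuous_onI)
qed

lemma emeasure_sigma_S1_UNIV: "emeasure sigma_S1 UNIV = 1"
proof -
  have "emeasure sigma_S1 UNIV = emeasure (uniform_measure lborel {0..<2*pi}) UNIV"
    unfolding sigma_S1_def using borel_measurable_circle
    by (subst emeasure_distr) (auto simp: measurable_cong_sets[OF sets_uniform_measure refl])
  also have "\<dots> = 1"
    by simp
  finally show ?thesis .
qed

interpretation sigma_S1: finite_measure sigma_S1
  by (rule finite_measureI) (simp add: emeasure_sigma_S1_UNIV)

interpretation lborel_sigma_S1: pair_sigma_finite lborel sigma_S1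
  by (intro pair_sigma_finite.intro lborel.sigma_finite_measure_axioms sigma_S1.sigma_finite_measure_axioms)

definition lines_meeting :: "((real^2) \<times> (real^2)) set \<Rightarrow> (real \<times> (real^2)) set" where
  "lines_meeting A = {(c, \<omega>). \<omega> \<in> sphere 0 1 \<and> (\<exists>x. x \<bullet> \<omega> = c \<and> (x, \<omega>) \<in> A)}"

lemma Fav_eq_outer_measure_of: "Fav A = outer_measure_of (lborel \<Otimes>\<^sub>M sigma_S1) (lines_meeting A)"
  by (simp add: Fav_def lines_meeting_def)

interpretation Fav: outer_measure_fun Fav
proof
  show "Fav {} = 0"
    by (simp add: Fav_eq_outer_measure_of lines_meeting_def)
  show "Fav X \<le> Fav Y" if "X \<subseteq> Y" for X Y
    unfolding Fav_eq_outer_measure_of using that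
    by (intro outer_measure_of_mono) (auto simp: lines_meeting_def)
  show "Fav (\<Union>i. A i) \<le> (\<Sum>i. Fav (A i))" for A :: "nat \<Rightarrow> ((real^2) \<times> (real^2)) set"
  proof -
    have "lines_meeting (\<Union>i. A i) = (\<Union>i. lines_meeting (A i))"
      by (auto simp: lines_meeting_def)
    then show ?thesis
      unfolding Fav_eq_outer_measure_of
      by (simp add: outer_measure_of_countably_subadditive space_pair_measure)
  qed
qed

lemma Fav_times_le_cover:
  fixes \<rho> :: "nat \<Rightarrow> real"
  assumes \<rho>: "\<And>i. 0 \<le> \<rho> i" and cover: "Y \<subseteq> (\<Union>i. ball (c i) (\<rho> i))" and G: "G \<in> sets borel"
  shows "Fav (Y \<times> G) \<le> (\<Sum>i. ennreal (2 * \<rho> i)) * emeasure sigma_S1 G"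
proof -
  let ?M = "lborel \<Otimes>\<^sub>M sigma_S1"
  define Q where "Q = {p :: real \<times> (real^2). snd p \<in> G \<inter> sphere 0 1 \<and> (\<exists>i. \<bar>fst p - c i \<bullet> snd p\<bar> < \<rho> i)}"
  have sets_M: "sets ?M = sets (borel :: (real \<times> (real^2)) measure)"
  proof -
    have "sets ?M = sets (borel \<Otimes>\<^sub>M (borel :: (real^2) measure))"
      by (rule sets_pair_measure_cong) simp_all
    then show ?thesis by (metis borel_prod)
  qed
  have "open {p :: real \<times> (real^2). \<bar>fst p - c i \<bullet> snd p\<bar> < \<rho> i}" for i
    by (intro open_Collect_less continuous_intros)
  then have strips: "(\<Union>i. {p. \<bar>fst p - c i \<bullet> snd p\<bar> < \<rho> i}) \<in> sets ?M"
    unfolding sets_M by (intro sets.countable_UN borel_open) auto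
  have directions: "UNIV \<times> (G \<inter> sphere 0 1) \<in> sets ?M"
    using G by (intro pair_measureI) auto
  have "Q = (UNIV \<times> (G \<inter> sphere 0 1)) \<inter> (\<Union>i. {p. \<bar>fst p - c i \<bullet> snd p\<bar> < \<rho> i})"
    by (auto simp: Q_def)
  then have Q_sets: "Q \<in> sets ?M"
    using sets.Int[OF directions strips] by (simp only:)
  have "lines_meeting (Y \<times> G) \<subseteq> Q"
  proof
    fix p assume "p \<in> lines_meeting (Y \<times> G)"
    then obtain x \<omega> where p: "p = (x \<bullet> \<omega>, \<omega>)" "\<omega> \<in> sphere 0 1" "x \<in> Y" "\<omega> \<in> G"
      by (auto simp: lines_meeting_def)
    from cover p(3) obtain i where "norm (x - c i) < \<rho> i"
      by (auto simp: dist_norm norm_minus_commute)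
    moreover have "\<bar>(x - c i) \<bullet> \<omega>\<bar> \<le> norm (x - c i)"
      using Cauchy_Schwarz_ineq2[of "x - c i" \<omega>] p(2) by simp
    ultimately show "p \<in> Q"
      using p by (auto simp: Q_def inner_diff_left intro!: exI[of _ i])
  qed
  then have "Fav (Y \<times> G) \<le> emeasure ?M Q"
    using outer_measure_of_mono[of _ Q ?M] Q_sets by (simp add: Fav_eq_outer_measure_of)
  also have "\<dots> = (\<integral>\<^sup>+\<omega>. emeasure lborel ((\<lambda>t. (t, \<omega>)) -` Q) \<partial>sigma_S1)"
    by (rule lborel_sigma_S1.emeasure_pair_measure_alt2[OF Q_sets])
  also have "\<dots> \<le> (\<integral>\<^sup>+\<omega>. (\<Sum>i. ennreal (2 * \<rho> i)) * indicator G \<omega> \<partial>sigma_S1)"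
  proof (rule nn_integral_mono)
    fix \<omega> :: "real^2"
    show "emeasure lborel ((\<lambda>t. (t, \<omega>)) -` Q) \<le> (\<Sum>i. ennreal (2 * \<rho> i)) * indicator G \<omega>"
    proof (cases "\<omega> \<in> G \<inter> sphere 0 1")
      case True
      then have "(\<lambda>t. (t, \<omega>)) -` Q = (\<Union>i. {c i \<bullet> \<omega> - \<rho> i <..< c i \<bullet> \<omega> + \<rho> i})"
        by (auto simp: Q_def abs_diff_less_iff)
      then have "emeasure lborel ((\<lambda>t. (t, \<omega>)) -` Q) \<le> (\<Sum>i. emeasure lborel {c i \<bullet> \<omega> - \<rho> i <..< c i \<bullet> \<omega> + \<rho> i})"
        by (auto intro: emeasure_subadditive_countably)
      also have "\<dots> = (\<Sum>i. ennreal (2 * \<rho> i))"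
        using \<rho> by (intro suminf_cong) simp
      finally show ?thesis using True by simp
    qed (auto simp: Q_def)
  qed
  also have "\<dots> = (\<Sum>i. ennreal (2 * \<rho> i)) * emeasure sigma_S1 G"
    using G by (intro nn_integral_cmult_indicator) simp
  finally show ?thesis .
qed

lemma Fav_times_le:
  assumes G: "G \<in> sets borel" and fin: "spherical1 Y \<noteq> \<infinity>"
  shows "Fav (Y \<times> G) \<le> spherical1 Y * emeasure sigma_S1 G"
proof -
  let ?s = "emeasure sigma_S1 G"
  have content: "sph_content 1 Y \<le> spherical1 Y"
    by (rule spherical1_ge_sph_content) simp
  have cover: "Fav (Y \<times> G) \<le> (\<Sum>i. ennreal (2 * \<rho> i)) * ?s"
    if "\<And>i. 0 \<le> \<rho> i \<and> \<rho> i \<le> 1" "Y \<subseteq> (\<Union>i. ball (c i) (\<rho> i))" for c and \<rho> :: "nat \<Rightarrow> real"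
    using that G by (intro Fav_times_le_cover) auto
  have "Fav (Y \<times> G) \<le> sph_content 1 Y * ?s"
  proof (cases "?s = 0")
    case True
    have "sph_content 1 Y < \<infinity>"
      using content fin by (auto simp: less_top[symmetric] top_unique)
    then obtain c and \<rho> :: "nat \<Rightarrow> real" where "\<And>i. 0 \<le> \<rho> i \<and> \<rho> i \<le> 1" "Y \<subseteq> (\<Union>i. ball (c i) (\<rho> i))"
      by (rule sph_content_lessE) blast
    then show ?thesis using cover True by auto
  next
    case False
    have "Fav (Y \<times> G) / ?s \<le> sph_content 1 Y"
    proof (rule sph_content_greatest)
      fix c and \<rho> :: "nat \<Rightarrow> real"
      assume "\<And>i. 0 \<le> \<rho> i \<and> \<rho> i \<le> 1" "Y \<subseteq> (\<Union>i. ball (c i) (\<rho> i))"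
      then show "Fav (Y \<times> G) / ?s \<le> (\<Sum>i. ennreal (2 * \<rho> i))"
        using cover False by (intro divide_le_posI_ennreal) (simp_all add: mult.commute zero_less_iff_neq_zero)
    qed
    then have "Fav (Y \<times> G) / ?s * ?s \<le> sph_content 1 Y * ?s"
      by (rule mult_right_mono) simp
    then show ?thesis
      using False sigma_S1.emeasure_finite[of G] by (simp add: ennreal_divide_times less_top[symmetric])
  qed
  also have "\<dots> \<le> spherical1 Y * ?s"
    using content by (rule mult_right_mono) simp
  finally show ?thesis .
qed

lemma Fav_rectangle_le:
  assumes fin: "spherical1 E \<noteq> \<infinity>" and a: "a \<in> sets (mu_E E)" and b: "b \<in> sets sigma_S1"
  shows "Fav ((a \<times> b) \<inter> (E \<times> UNIV)) \<le> emeasure (mu_E E \<Otimes>\<^sub>M sigma_S1) (a \<times> b)"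
proof -
  obtain a' where a': "a' \<in> sets borel" "a \<subseteq> a'" "emeasure (mu_E E) a = spherical1 (a' \<inter> E)"
    using mu_E_upper[OF a] by blast
  have "spherical1 (a' \<inter> E) \<noteq> \<infinity>"
    using fin neq_top_trans[OF _ spherical1.mono[of "a' \<inter> E" E]] by auto
  then have "Fav ((a' \<inter> E) \<times> b) \<le> spherical1 (a' \<inter> E) * emeasure sigma_S1 b"
    using b by (intro Fav_times_le) simp_all
  moreover have "Fav ((a \<times> b) \<inter> (E \<times> UNIV)) \<le> Fav ((a' \<inter> E) \<times> b)"
    using a' by (intro Fav.mono) auto
  ultimately show ?thesis
    using a b a' by (simp add: sigma_S1.emeasure_pair_measure_Times)
qed

lemma Fav_restrict_le_emeasure_pair:
  assumes fin: "spherical1 E \<noteq> \<infinity>" and B: "B \<in> sets (mu_E E \<Otimes>\<^sub>M sigma_S1)"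
  shows "Fav (B \<inter> (E \<times> UNIV)) \<le> emeasure (mu_E E \<Otimes>\<^sub>M sigma_S1) B"
proof -
  interpret FE: outer_measure_fun "\<lambda>A. Fav (A \<inter> (E \<times> UNIV))"
    by (rule Fav.restrict)
  let ?R = "{a \<times> b | a b. a \<in> sets (mu_E E) \<and> b \<in> sets sigma_S1}"
  have top: "UNIV \<in> sets (mu_E E)" "UNIV \<in> sets sigma_S1"
    using sets.top[of "mu_E E"] sets.top[of sigma_S1] by simp_all
  show ?thesis
  proof (rule FE.le_emeasure_if_le_on_generator[OF semiring_of_sets_rectangles sets_pair_measure _ _ _ B])
    show "space (mu_E E) \<times> space sigma_S1 \<in> ?R"
      using top by (auto intro!: exI[of _ UNIV])
    have "emeasure (mu_E E \<Otimes>\<^sub>M sigma_S1) (UNIV \<times> UNIV) = spherical1 E"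
      using sigma_S1.emeasure_pair_measure_Times[OF top]
      by (simp add: emeasure_mu_E emeasure_sigma_S1_UNIV)
    then show "emeasure (mu_E E \<Otimes>\<^sub>M sigma_S1) (space (mu_E E) \<times> space sigma_S1) \<noteq> \<infinity>"
      using fin by simp
  qed (use Fav_rectangle_le[OF fin] in blast)
qed

theorem lemma5p1:
  shows "\<exists>C::real. C > 0 \<and>
    (\<forall>E :: (real^2) set. compact E \<and> spherical1 E < \<infinity> \<longrightarrow>
      (\<forall>A \<in> sets (completion (mu_E E \<Otimes>\<^sub>M sigma_S1)).
         A \<subseteq> E \<times> sphere 0 1 \<longrightarrow>
         Fav A \<le> ennreal C * emeasure (completion (mu_E E \<Otimes>\<^sub>M sigma_S1)) A))"
proof (intro exI[of _ 1] conjI allI impI ballI)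
  fix E :: "(real^2) set" and A
  assume "compact E \<and> spherical1 E < \<infinity>"
  then have fin: "spherical1 E \<noteq> \<infinity>" by auto
  assume A: "A \<in> sets (completion (mu_E E \<Otimes>\<^sub>M sigma_S1))" "A \<subseteq> E \<times> sphere 0 1"
  obtain B where B: "B \<in> sets (mu_E E \<Otimes>\<^sub>M sigma_S1)" "A \<subseteq> B"
    "emeasure (completion (mu_E E \<Otimes>\<^sub>M sigma_S1)) A = emeasure (mu_E E \<Otimes>\<^sub>M sigma_S1) B"
    using Complete_Measure.completion_upper[OF A(1)] by blast
  have "Fav A \<le> Fav (B \<inter> (E \<times> UNIV))"
    using A(2) B(2) by (intro Fav.mono) auto
  also have "\<dots> \<le> emeasure (mu_E E \<Otimes>\<^sub>M sigma_S1) B"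
    by (rule Fav_restrict_le_emeasure_pair[OF fin B(1)])
  finally show "Fav A \<le> ennreal 1 * emeasure (completion (mu_E E \<Otimes>\<^sub>M sigma_S1)) A"
    using B(3) by simp
qed simp

end
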